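(* Fix $\epsilon\in(0,1)$, $d\ge1$, and let $f$ be the binary-tree function of depth $d$ with all $p_i=\frac{1+\epsilon}{2}$; let $L=2^d$. For a non-adaptive strategy $S$ (a permutation of the $n$ edges) and input $x$, let $\mathrm{cost}^L(f,x,S)$ be the number of leaf-edge tests performed by $S$ on $x$ before $f(x)$ is determined. Then: (i) there exists a leaf-last non-adaptive strategy that minimizes $\mathbb{E}[\mathrm{cost}^L(f,x,S)\mid f(x)=1]$ over all non-adaptive strategies $S$; and (ii) for every leaf-last non-adaptive strategy $S$ attaining this minimum and every $\ell\in[L-1]$, $q_\ell(S)\ge q_{\ell+1}(S)$, where $q_\ell(S)$ denotes the probability, conditioned on $f(x)=1$, that the $\ell$-th leaf edge tested by $S$ is the first leaf edge in $S$'s order whose leaf is alive.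
   Context: Binary-tree function of depth $d$: take the complete binary tree of depth $d$ (root at depth $0$, $2^d$ leaves at depth $d$); it has $n=2^{d+1}-2$ edges, numbered $1,\dots,n$, and variable $x_i$ is associated with edge $i$. The input $x\in\{0,1\}^n$ has independent coordinates with $\Pr(x_i=1)=p_i$. A leaf is alive if $x_i=1$ for every edge $i$ on the root-to-leaf path; $f(x)=1$ iff at least one leaf is alive. A non-adaptive strategy is a fixed permutation of the edges, tested in that order until $f(x)$ is determined (i.e. until $f(x')=f(x)$ for all $x'$ agreeing with $x$ on the tested edges). Leaf edges are the edges joining a leaf to its parent; the others are internal edges. A non-adaptive strategy is leaf-last if all internal edges precede all leaf edges in its permutation. *)

theory Defs
  imports Complex_Main "HOL-Library.FuncSet"
begin

(* Complete binary tree of depth d in heap numbering: nodes 1 .. 2^(d+1)-1, root 1,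
   children of v are 2v and 2v+1.  Each edge is identified with its lower (child)
   endpoint, so the edges are the nodes 2 .. 2^(d+1)-1 (n = 2^(d+1)-2 of them). *)
definition bt_edges :: "nat \<Rightarrow> nat set" where
  "bt_edges d = {2..<2^(d+1)}"

(* leaves (depth d); the leaf edge of leaf v is identified with v itself *)
definition bt_leaves :: "nat \<Rightarrow> nat set" where
  "bt_leaves d = {2^d..<2^(d+1)}"

definition bt_inputs :: "nat \<Rightarrow> (nat \<Rightarrow> bool) set" where
  "bt_inputs d = PiE (bt_edges d) (\<lambda>_. UNIV)"

(* leaf v is alive iff all edges on the root-to-v path (nodes v div 2^k, k<d) are 1 *)
definition bt_alive :: "nat \<Rightarrow> (nat \<Rightarrow> bool) \<Rightarrow> nat \<Rightarrow> bool" where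
  "bt_alive d x v = (\<forall>k<d. x (v div 2^k))"

definition bt_f :: "nat \<Rightarrow> (nat \<Rightarrow> bool) \<Rightarrow> bool" where
  "bt_f d x = (\<exists>v\<in>bt_leaves d. bt_alive d x v)"

definition bt_weight :: "nat \<Rightarrow> real \<Rightarrow> (nat \<Rightarrow> bool) \<Rightarrow> real" where
  "bt_weight d p x = (\<Prod>e\<in>bt_edges d. if x e then p else 1 - p)"

definition bt_determined :: "nat \<Rightarrow> nat set \<Rightarrow> (nat \<Rightarrow> bool) \<Rightarrow> bool" where
  "bt_determined d T x = (\<forall>x'\<in>bt_inputs d. (\<forall>e\<in>T. x' e = x e) \<longrightarrow> bt_f d x' = bt_f d x)"

definition bt_strategy :: "nat \<Rightarrow> nat list \<Rightarrow> bool" where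
  "bt_strategy d S = (distinct S \<and> set S = bt_edges d)"

definition bt_num_tests :: "nat \<Rightarrow> nat list \<Rightarrow> (nat \<Rightarrow> bool) \<Rightarrow> nat" where
  "bt_num_tests d S x = (LEAST k. bt_determined d (set (take k S)) x)"

definition bt_costL :: "nat \<Rightarrow> nat list \<Rightarrow> (nat \<Rightarrow> bool) \<Rightarrow> nat" where
  "bt_costL d S x = length (filter (\<lambda>e. e \<in> bt_leaves d) (take (bt_num_tests d S x) S))"

definition bt_leaf_last :: "nat \<Rightarrow> nat list \<Rightarrow> bool" where
  "bt_leaf_last d S =
     (\<forall>i j. i < j \<and> j < length S \<and> S ! i \<in> bt_leaves d \<longrightarrow> S ! j \<in> bt_leaves d)"

definition bt_cond_cost :: "nat \<Rightarrow> real \<Rightarrow> nat list \<Rightarrow> real" where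
  "bt_cond_cost d p S =
     (\<Sum>x\<in>{x\<in>bt_inputs d. bt_f d x}. bt_weight d p x * real (bt_costL d S x))
     / (\<Sum>x\<in>{x\<in>bt_inputs d. bt_f d x}. bt_weight d p x)"

(* the l-th (1-indexed) leaf edge in S's order is the first one whose leaf is alive *)
definition bt_first_alive :: "nat \<Rightarrow> nat list \<Rightarrow> (nat \<Rightarrow> bool) \<Rightarrow> nat \<Rightarrow> bool" where
  "bt_first_alive d S x l =
     (let Ls = filter (\<lambda>e. e \<in> bt_leaves d) S in
        bt_alive d x (Ls ! (l - 1)) \<and> (\<forall>j < l - 1. \<not> bt_alive d x (Ls ! j)))"

definition bt_q :: "nat \<Rightarrow> real \<Rightarrow> nat list \<Rightarrow> nat \<Rightarrow> real" where
  "bt_q d p S l =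
     (\<Sum>x\<in>{x\<in>bt_inputs d. bt_f d x \<and> bt_first_alive d S x l}. bt_weight d p x)
     / (\<Sum>x\<in>{x\<in>bt_inputs d. bt_f d x}. bt_weight d p x)"

end

theory Submission
  imports Defs
begin

text \<open>On an input with \<open>f(x) = 1\<close> every strategy must have tested an alive leaf edge before
  \<open>f(x)\<close> is determined, so its leaf cost exceeds the number of dead leaves that precede the first
  alive one in its leaf order. A leaf-last strategy with the same leaf order attains this bound,
  because once all internal edges are known a single alive leaf edge certifies \<open>f(x) = 1\<close>;
  hence some optimal strategy is leaf-last. For an optimal leaf-last strategy, swapping its
  \<open>l\<close>-th and \<open>(l+1)\<close>-th leaf edges changes the conditional cost by at most
  \<open>q\<^sub>l - q\<^sub>l\<^sub>+\<^sub>1\<close>, which optimality forces to be nonnegative.\<close>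

abbreviation leaf_order :: "nat \<Rightarrow> nat list \<Rightarrow> nat list" where
  "leaf_order d S \<equiv> filter (\<lambda>e. e \<in> bt_leaves d) S"

abbreviation bt_true_inputs :: "nat \<Rightarrow> (nat \<Rightarrow> bool) set" where
  "bt_true_inputs d \<equiv> {x \<in> bt_inputs d. bt_f d x}"

text \<open>The 0-based position of the first alive leaf in \<open>Ls\<close>; it is \<open>length Ls\<close> if none is alive.\<close>
definition first_alive_pos :: "nat \<Rightarrow> (nat \<Rightarrow> bool) \<Rightarrow> nat list \<Rightarrow> nat" where
  "first_alive_pos d x Ls = length (takeWhile (\<lambda>v. \<not> bt_alive d x v) Ls)"

lemma length_filter_take_le: "length (filter P (take k xs)) \<le> length (filter P xs)"
  by (metis append_take_drop_id filter_append le_add1 length_append)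

lemma filter_Not_append_filter_eq:
  assumes "\<forall>y\<in>set (dropWhile (\<lambda>x. \<not> P x) xs). P y"
  shows "filter (\<lambda>x. \<not> P x) xs @ filter P xs = xs"
proof -
  have dw: "filter (\<lambda>x. \<not> P x) (dropWhile (\<lambda>x. \<not> P x) xs) = []"
    "filter P (dropWhile (\<lambda>x. \<not> P x) xs) = dropWhile (\<lambda>x. \<not> P x) xs"
    using assms unfolding filter_empty_conv filter_id_conv by blast+
  have tw: "filter (\<lambda>x. \<not> P x) (takeWhile (\<lambda>x. \<not> P x) xs) = takeWhile (\<lambda>x. \<not> P x) xs"
    "filter P (takeWhile (\<lambda>x. \<not> P x) xs) = []"
    unfolding filter_empty_conv filter_id_conv by (auto dest: set_takeWhileD)
  have "filter (\<lambda>x. \<not> P x) xs @ filter P xs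
      = filter (\<lambda>x. \<not> P x) (takeWhile (\<lambda>x. \<not> P x) xs @ dropWhile (\<lambda>x. \<not> P x) xs)
        @ filter P (takeWhile (\<lambda>x. \<not> P x) xs @ dropWhile (\<lambda>x. \<not> P x) xs)"
    by simp
  also have "\<dots> = takeWhile (\<lambda>x. \<not> P x) xs @ dropWhile (\<lambda>x. \<not> P x) xs"
    by (simp only: filter_append dw tw append_Nil append_Nil2)
  finally show ?thesis by simp
qed

lemma list_split_adjacent:
  assumes "Suc i < length xs"
  obtains ys a b zs where "xs = ys @ a # b # zs" "length ys = i"
proof
  show "xs = take i xs @ xs ! i # xs ! Suc i # drop (Suc (Suc i)) xs"
    using assms by (simp add: Cons_nth_drop_Suc)
  show "length (take i xs) = i" using assms by simp
qed

lemma length_takeWhile_less: "x \<in> set xs \<Longrightarrow> \<not> P x \<Longrightarrow> length (takeWhile P xs) < length xs"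
  by (induction xs) auto

lemma length_takeWhile_eq_iff:
  assumes "i < length xs"
  shows "length (takeWhile P xs) = i \<longleftrightarrow> \<not> P (xs ! i) \<and> (\<forall>j<i. P (xs ! j))"
proof
  assume len: "length (takeWhile P xs) = i"
  have "P (xs ! j)" if "j < i" for j
  proof -
    have "takeWhile P xs ! j \<in> set (takeWhile P xs)" using that len by simp
    then show ?thesis using that len takeWhile_nth[of j P xs] by (auto dest: set_takeWhileD)
  qed
  then show "\<not> P (xs ! i) \<and> (\<forall>j<i. P (xs ! j))"
    using len assms nth_length_takeWhile[of P xs] by auto
next
  assume "\<not> P (xs ! i) \<and> (\<forall>j<i. P (xs ! j))"
  then have "takeWhile P xs = take i xs" by (intro takeWhile_eq_take_P_nth) auto
  then show "length (takeWhile P xs) = i" using assms by simp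
qed

lemma length_takeWhile_swap_le:
  "length (takeWhile P (xs @ b # a # ys))
     + (if length (takeWhile P (xs @ a # b # ys)) = Suc (length xs) then 1 else 0)
   \<le> length (takeWhile P (xs @ a # b # ys))
     + (if length (takeWhile P (xs @ a # b # ys)) = length xs then 1 else 0)"
proof (cases "\<forall>x\<in>set xs. P x")
  case True
  then show ?thesis by (cases "P a"; cases "P b") simp_all
next
  case False
  then obtain x where "x \<in> set xs" "\<not> P x" by blast
  then show ?thesis using length_takeWhile_less[of x xs P] by simp
qed

lemma leaf_ancestor_in_edges:
  assumes "v \<in> bt_leaves d" "k < d"
  shows "v div 2^k \<in> bt_edges d"
proof -
  have v: "2^d \<le> v" "v < 2^(d+1)" using assms(1) by (auto simp: bt_leaves_def)
  have "(2::nat) \<le> 2^(d-k)" using assms(2) by (simp add: self_le_power)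
  also have "\<dots> = 2^d div 2^k" using assms(2) by (simp add: power_diff)
  also have "\<dots> \<le> v div 2^k" using v(1) by (rule div_le_mono)
  finally have "2 \<le> v div 2^k" .
  moreover have "v div 2^k < 2^(d+1)" using v(2) div_le_dividend[of v "2^k"] by linarith
  ultimately show ?thesis by (simp add: bt_edges_def)
qed

lemma leaf_ancestor_not_leaf:
  assumes "v \<in> bt_leaves d" "0 < k"
  shows "v div 2^k \<notin> bt_leaves d"
proof -
  have "v div 2^k \<le> v div 2" using assms(2) by (intro div_le_mono2) (simp_all add: self_le_power)
  moreover have "v div 2 < 2^d" using assms(1) by (auto simp: bt_leaves_def)
  ultimately show ?thesis by (auto simp: bt_leaves_def)
qed

lemma bt_leaves_subset_edges: "d \<ge> 1 \<Longrightarrow> bt_leaves d \<subseteq> bt_edges d"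
  using self_le_power[of 2 d] by (auto simp: bt_leaves_def bt_edges_def)

lemma finite_bt_edges: "finite (bt_edges d)"
  by (simp add: bt_edges_def)

lemma finite_bt_inputs: "finite (bt_inputs d)"
  by (simp add: bt_inputs_def finite_PiE finite_bt_edges)

lemma bt_true_inputs_nonempty:
  assumes "d \<ge> 1"
  shows "bt_true_inputs d \<noteq> {}"
proof -
  define x where "x = restrict (\<lambda>_. True) (bt_edges d)"
  have "x \<in> bt_inputs d" by (simp add: x_def bt_inputs_def)
  moreover have "bt_alive d x (2^d)"
    using leaf_ancestor_in_edges[of "2^d" d] by (simp add: bt_alive_def bt_leaves_def x_def)
  moreover have "(2::nat)^d \<in> bt_leaves d" by (simp add: bt_leaves_def)
  ultimately show ?thesis unfolding bt_f_def by blast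
qed

lemma bt_determined_edges:
  assumes "x \<in> bt_inputs d"
  shows "bt_determined d (bt_edges d) x"
  using assms PiE_ext[of _ "bt_edges d" "\<lambda>_. UNIV" x]
  by (auto simp: bt_determined_def bt_inputs_def)

lemma bt_determined_num_tests:
  assumes "bt_strategy d S" "x \<in> bt_inputs d"
  shows "bt_determined d (set (take (bt_num_tests d S x) S)) x"
  unfolding bt_num_tests_def
proof (rule LeastI)
  show "bt_determined d (set (take (length S) S)) x"
    using assms bt_determined_edges by (simp add: bt_strategy_def)
qed

text \<open>If no tested leaf is alive, switching off every untested leaf edge kills all leaves
  without changing the tested bits.\<close>
lemma bt_determined_alive_leaf:
  assumes d: "d \<ge> 1" and x: "x \<in> bt_inputs d" "bt_f d x"
    and T: "T \<subseteq> bt_edges d" "bt_determined d T x"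
  shows "\<exists>v\<in>T. v \<in> bt_leaves d \<and> bt_alive d x v"
proof (rule ccontr)
  assume none: "\<not> ?thesis"
  define x' where "x' = restrict (\<lambda>e. x e \<and> (e \<in> T \<or> e \<notin> bt_leaves d)) (bt_edges d)"
  have "x' \<in> bt_inputs d" by (simp add: x'_def bt_inputs_def)
  moreover have "\<forall>e\<in>T. x' e = x e" using T(1) by (auto simp: x'_def)
  moreover have "\<not> bt_f d x'"
  proof
    assume "bt_f d x'"
    then obtain v where v: "v \<in> bt_leaves d" "bt_alive d x' v" by (auto simp: bt_f_def)
    have anc: "x (v div 2^k) \<and> (v div 2^k \<in> T \<or> v div 2^k \<notin> bt_leaves d)" if "k < d" for k
      using v that leaf_ancestor_in_edges[OF v(1) that] by (auto simp: bt_alive_def x'_def)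
    then have "bt_alive d x v" by (simp add: bt_alive_def)
    moreover have "v \<in> T" using anc[of 0] d v(1) by simp
    ultimately show False using none v(1) by blast
  qed
  ultimately show False using T(2) x(2) by (auto simp: bt_determined_def)
qed

lemma bt_determined_by_alive_leaf:
  assumes "bt_edges d - bt_leaves d \<subseteq> T" "u \<in> T" "u \<in> bt_leaves d" "bt_alive d x u"
  shows "bt_determined d T x"
  unfolding bt_determined_def
proof (intro ballI impI)
  fix x' assume agree: "\<forall>e\<in>T. x' e = x e"
  have "x' (u div 2^k)" if "k < d" for k
  proof -
    have "u div 2^k \<in> T"
    proof (cases "k = 0")
      case False
      then show ?thesis using assms(1,3) that leaf_ancestor_in_edges leaf_ancestor_not_leaf by blast
    qed (use assms(2) in simp)
    then show ?thesis using assms(4) agree that by (simp add: bt_alive_def)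
  qed
  then have "bt_alive d x' u" by (simp add: bt_alive_def)
  then show "bt_f d x' = bt_f d x" using assms(3,4) by (auto simp: bt_f_def)
qed

lemma bt_costL_le:
  assumes "bt_determined d (set (take k S)) x"
  shows "bt_costL d S x \<le> length (leaf_order d (take k S))"
proof -
  have "bt_num_tests d S x \<le> k" unfolding bt_num_tests_def using assms by (rule Least_le)
  then have "take (bt_num_tests d S x) S = take (bt_num_tests d S x) (take k S)" by simp
  then show ?thesis unfolding bt_costL_def by (metis length_filter_take_le)
qed

lemma bt_costL_gt_first_alive_pos:
  assumes d: "d \<ge> 1" and S: "bt_strategy d S" and x: "x \<in> bt_inputs d" "bt_f d x"
  shows "first_alive_pos d x (leaf_order d S) < bt_costL d S x"
proof -
  define k where "k = bt_num_tests d S x"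
  have "set (take k S) \<subseteq> bt_edges d"
    using S set_take_subset[of k S] by (simp add: bt_strategy_def)
  then obtain v where "v \<in> set (take k S)" "v \<in> bt_leaves d" "bt_alive d x v"
    using bt_determined_alive_leaf[OF d x] bt_determined_num_tests[OF S x(1), folded k_def]
    by blast
  then have v: "v \<in> set (leaf_order d (take k S))" "bt_alive d x v" by simp_all
  have "leaf_order d S = leaf_order d (take k S) @ leaf_order d (drop k S)"
    by (metis append_take_drop_id filter_append)
  then have "first_alive_pos d x (leaf_order d S) = first_alive_pos d x (leaf_order d (take k S))"
    using v by (simp add: first_alive_pos_def)
  also have "\<dots> < length (leaf_order d (take k S))"
    unfolding first_alive_pos_def using v by (intro length_takeWhile_less) auto
  finally show ?thesis by (simp add: bt_costL_def k_def)
qed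

lemma leaf_last_append:
  assumes "set Is \<inter> bt_leaves d = {}" "set Ls \<subseteq> bt_leaves d"
  shows "bt_leaf_last d (Is @ Ls)"
  unfolding bt_leaf_last_def
proof (intro allI impI)
  fix i j assume ij: "i < j \<and> j < length (Is @ Ls) \<and> (Is @ Ls) ! i \<in> bt_leaves d"
  then have "\<not> i < length Is" using assms(1) nth_mem[of i Is] by (auto simp: nth_append disjoint_iff)
  with ij have "(Is @ Ls) ! j \<in> set Ls" by (auto simp: nth_append)
  then show "(Is @ Ls) ! j \<in> bt_leaves d" using assms(2) by blast
qed

lemma leaf_last_decomp:
  assumes "bt_leaf_last d S"
  shows "S = filter (\<lambda>e. e \<notin> bt_leaves d) S @ leaf_order d S"
proof -
  define i where "i = length (takeWhile (\<lambda>e. e \<notin> bt_leaves d) S)"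
  have "S ! j \<in> bt_leaves d" if "i \<le> j" "j < length S" for j
  proof -
    have "S ! i \<in> bt_leaves d" using that nth_length_takeWhile[of "\<lambda>e. e \<notin> bt_leaves d" S]
      by (simp add: i_def)
    show ?thesis
    proof (cases "i = j")
      case False
      then have "i < j" using that(1) by simp
      with \<open>S ! i \<in> bt_leaves d\<close> that(2) assms show ?thesis unfolding bt_leaf_last_def by blast
    qed (use \<open>S ! i \<in> bt_leaves d\<close> in simp)
  qed
  then have "\<forall>y\<in>set (dropWhile (\<lambda>e. e \<notin> bt_leaves d) S). y \<in> bt_leaves d"
    by (auto simp: dropWhile_eq_drop i_def in_set_conv_nth)
  then show ?thesis by (rule filter_Not_append_filter_eq[symmetric])
qed

lemma bt_costL_leaf_last:
  assumes d: "d \<ge> 1" and S: "bt_strategy d S" "bt_leaf_last d S"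
    and x: "x \<in> bt_inputs d" "bt_f d x"
  shows "bt_costL d S x = Suc (first_alive_pos d x (leaf_order d S))"
proof -
  define Is where "Is = filter (\<lambda>e. e \<notin> bt_leaves d) S"
  define Ls where "Ls = leaf_order d S"
  define m where "m = first_alive_pos d x Ls"
  have S_eq: "S = Is @ Ls" using leaf_last_decomp[OF S(2)] by (simp add: Is_def Ls_def)
  obtain v where "v \<in> bt_leaves d" "bt_alive d x v" using x(2) by (auto simp: bt_f_def)
  moreover have "bt_leaves d \<subseteq> set S" using S(1) bt_leaves_subset_edges[OF d] by (simp add: bt_strategy_def)
  ultimately have m_less: "m < length Ls"
    unfolding m_def first_alive_pos_def Ls_def by (intro length_takeWhile_less[of v]) auto
  define u where "u = Ls ! m"
  have u: "u \<in> bt_leaves d" "bt_alive d x u"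
    using m_less nth_length_takeWhile[of "\<lambda>v. \<not> bt_alive d x v" Ls] nth_mem[OF m_less]
    by (simp_all add: u_def m_def first_alive_pos_def Ls_def)
  have prefix: "take (length Is + Suc m) S = Is @ take m Ls @ [u]"
    using m_less by (simp add: S_eq u_def take_Suc_conv_app_nth)
  have "bt_edges d - bt_leaves d \<subseteq> set Is" using S(1) by (auto simp: Is_def bt_strategy_def)
  then have "bt_determined d (set (take (length Is + Suc m) S)) x"
    unfolding prefix using u by (intro bt_determined_by_alive_leaf) auto
  then have "bt_costL d S x \<le> length (leaf_order d (take (length Is + Suc m) S))"
    by (rule bt_costL_le)
  also have "\<dots> = Suc m"
  proof -
    have "leaf_order d (take m Ls) = take m Ls"
      by (auto simp: Ls_def filter_id_conv dest: in_set_takeD)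
    then show ?thesis unfolding prefix using m_less u(1) by (simp add: Is_def filter_empty_conv)
  qed
  finally show ?thesis
    using bt_costL_gt_first_alive_pos[OF d S(1) x] by (simp add: m_def Ls_def)
qed

lemma leaf_order_strategy:
  assumes "d \<ge> 1" "bt_strategy d S"
  shows "set (leaf_order d S) = bt_leaves d" "distinct (leaf_order d S)"
    "length (leaf_order d S) = 2^d"
proof -
  show set: "set (leaf_order d S) = bt_leaves d" and dist: "distinct (leaf_order d S)"
    using assms bt_leaves_subset_edges by (auto simp: bt_strategy_def)
  have "length (leaf_order d S) = card (bt_leaves d)"
    using distinct_card[OF dist] by (simp only: set)
  then show "length (leaf_order d S) = 2^d" by (simp add: bt_leaves_def)
qed

lemma leaf_last_strategy_append:
  assumes "d \<ge> 1" "set Is = bt_edges d - bt_leaves d" "distinct Is"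
    "set Ls = bt_leaves d" "distinct Ls"
  shows "bt_strategy d (Is @ Ls)" "bt_leaf_last d (Is @ Ls)" "leaf_order d (Is @ Ls) = Ls"
proof -
  show "bt_strategy d (Is @ Ls)"
    using assms bt_leaves_subset_edges[OF assms(1)] by (auto simp: bt_strategy_def)
  show "bt_leaf_last d (Is @ Ls)" using assms(2,4) by (intro leaf_last_append) auto
  show "leaf_order d (Is @ Ls) = Ls"
    using assms(2,4) by (auto simp: filter_empty_conv filter_id_conv)
qed

lemma finite_bt_true_inputs: "finite (bt_true_inputs d)"
  by (simp add: finite_bt_inputs)

lemma bt_weight_nonneg: "0 \<le> p \<Longrightarrow> p \<le> 1 \<Longrightarrow> 0 \<le> bt_weight d p x"
  unfolding bt_weight_def by (rule prod_nonneg) auto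

lemma bt_weight_pos: "0 < p \<Longrightarrow> p < 1 \<Longrightarrow> 0 < bt_weight d p x"
  unfolding bt_weight_def by (rule prod_pos) auto

lemma bt_true_mass_pos:
  assumes "d \<ge> 1" "0 < p" "p < 1"
  shows "0 < (\<Sum>x\<in>bt_true_inputs d. bt_weight d p x)"
  using bt_true_inputs_nonempty[OF assms(1)] bt_weight_pos[OF assms(2,3)]
  by (intro sum_pos finite_bt_true_inputs) auto

lemma bt_cond_cost_mono:
  assumes "0 \<le> p" "p \<le> 1" "\<And>x. x \<in> bt_true_inputs d \<Longrightarrow> bt_costL d S x \<le> bt_costL d S' x"
  shows "bt_cond_cost d p S \<le> bt_cond_cost d p S'"
  unfolding bt_cond_cost_def using assms bt_weight_nonneg[OF assms(1,2)]
  by (intro divide_right_mono sum_mono mult_left_mono sum_nonneg) auto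

lemma bt_cond_cost_leaf_last:
  assumes d: "d \<ge> 1" and p: "0 < p" "p < 1" and S: "bt_strategy d S" "bt_leaf_last d S"
  shows "bt_cond_cost d p S = 1 +
    (\<Sum>x\<in>bt_true_inputs d. bt_weight d p x * real (first_alive_pos d x (leaf_order d S)))
      / (\<Sum>x\<in>bt_true_inputs d. bt_weight d p x)"
proof -
  have "(\<Sum>x\<in>bt_true_inputs d. bt_weight d p x * real (bt_costL d S x))
      = (\<Sum>x\<in>bt_true_inputs d. bt_weight d p x * real (first_alive_pos d x (leaf_order d S)))
        + (\<Sum>x\<in>bt_true_inputs d. bt_weight d p x)"
    by (simp add: bt_costL_leaf_last[OF d S] algebra_simps sum.distrib)
  then show ?thesis
    using bt_true_mass_pos[OF d p] unfolding bt_cond_cost_def by (simp add: field_simps)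
qed

lemma bt_q_first_alive_pos:
  assumes "1 \<le> l" "l \<le> length (leaf_order d S)"
  shows "bt_q d p S l =
    (\<Sum>x\<in>bt_true_inputs d. if first_alive_pos d x (leaf_order d S) = l - 1 then bt_weight d p x else 0)
      / (\<Sum>x\<in>bt_true_inputs d. bt_weight d p x)"
proof -
  have "bt_first_alive d S x l \<longleftrightarrow> first_alive_pos d x (leaf_order d S) = l - 1" for x
    unfolding bt_first_alive_def first_alive_pos_def Let_def
    using assms length_takeWhile_eq_iff[of "l - 1" "leaf_order d S" "\<lambda>v. \<not> bt_alive d x v"] by simp
  then have "{x \<in> bt_inputs d. bt_f d x \<and> bt_first_alive d S x l}
      = {x \<in> bt_true_inputs d. first_alive_pos d x (leaf_order d S) = l - 1}" by auto
  then have "(\<Sum>x\<in>{x \<in> bt_inputs d. bt_f d x \<and> bt_first_alive d S x l}. bt_weight d p x)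
      = (\<Sum>x\<in>bt_true_inputs d.
           if first_alive_pos d x (leaf_order d S) = l - 1 then bt_weight d p x else 0)"
    by (simp only: sum.inter_filter[OF finite_bt_true_inputs])
  then show ?thesis unfolding bt_q_def by simp
qed

lemma first_alive_pos_swap_sum_le:
  fixes w :: "(nat \<Rightarrow> bool) \<Rightarrow> real"
  assumes "\<And>x. x \<in> A \<Longrightarrow> 0 \<le> w x"
  shows "(\<Sum>x\<in>A. w x * real (first_alive_pos d x (xs @ b # a # ys)))
         + (\<Sum>x\<in>A. if first_alive_pos d x (xs @ a # b # ys) = Suc (length xs) then w x else 0)
       \<le> (\<Sum>x\<in>A. w x * real (first_alive_pos d x (xs @ a # b # ys)))
         + (\<Sum>x\<in>A. if first_alive_pos d x (xs @ a # b # ys) = length xs then w x else 0)"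
  unfolding sum.distrib[symmetric]
proof (rule sum_mono)
  fix x assume x: "x \<in> A"
  define m where "m = first_alive_pos d x (xs @ a # b # ys)"
  define m' where "m' = first_alive_pos d x (xs @ b # a # ys)"
  have "m' + (if m = Suc (length xs) then 1 else 0) \<le> m + (if m = length xs then 1 else 0)"
    unfolding m_def m'_def first_alive_pos_def by (rule length_takeWhile_swap_le)
  then have "real m' + (if m = Suc (length xs) then 1 else 0) \<le> real m + (if m = length xs then 1 else 0)"
    by (auto split: if_splits)
  then have "w x * (real m' + (if m = Suc (length xs) then 1 else 0))
      \<le> w x * (real m + (if m = length xs then 1 else 0))"
    using assms[OF x] by (rule mult_left_mono)
  then show "w x * real m' + (if m = Suc (length xs) then w x else 0)
      \<le> w x * real m + (if m = length xs then w x else 0)"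
    by (cases "m = length xs"; cases "m = Suc (length xs)") (simp_all add: distrib_left)
qed

text \<open>Moving all internal edges to the front keeps the order of the leaf edges, and a
  leaf-last strategy stops right after the first alive leaf edge.\<close>
lemma ex_leaf_last_cond_cost_le:
  assumes d: "d \<ge> 1" and p: "0 \<le> p" "p \<le> 1" and S: "bt_strategy d S"
  shows "\<exists>S'. bt_strategy d S' \<and> bt_leaf_last d S' \<and> bt_cond_cost d p S' \<le> bt_cond_cost d p S"
proof -
  obtain Is where Is: "set Is = bt_edges d - bt_leaves d" "distinct Is"
    using finite_distinct_list[of "bt_edges d - bt_leaves d"] finite_bt_edges by blast
  note S' = leaf_last_strategy_append[OF d Is leaf_order_strategy(1,2)[OF d S]]
  have "bt_cond_cost d p (Is @ leaf_order d S) \<le> bt_cond_cost d p S"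
  proof (rule bt_cond_cost_mono[OF p])
    fix x assume "x \<in> bt_true_inputs d"
    then show "bt_costL d (Is @ leaf_order d S) x \<le> bt_costL d S x"
      using bt_costL_leaf_last[OF d S'(1,2)] bt_costL_gt_first_alive_pos[OF d S] S'(3)
      by (simp add: Suc_le_eq)
  qed
  with S' show ?thesis by blast
qed

lemma ex_optimal_leaf_last_strategy:
  assumes d: "d \<ge> 1" and p: "0 \<le> p" "p \<le> 1"
  shows "\<exists>S. bt_strategy d S \<and> bt_leaf_last d S \<and>
           (\<forall>S'. bt_strategy d S' \<longrightarrow> bt_cond_cost d p S \<le> bt_cond_cost d p S')"
proof -
  have "{S. bt_strategy d S} \<subseteq> {xs. set xs \<subseteq> bt_edges d \<and> distinct xs}"
    by (auto simp: bt_strategy_def)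
  then have "finite {S. bt_strategy d S}"
    using finite_subset finite_subset_distinct[OF finite_bt_edges] by blast
  moreover have "{S. bt_strategy d S} \<noteq> {}"
    using finite_distinct_list[OF finite_bt_edges] by (auto simp: bt_strategy_def)
  ultimately obtain S0 where "is_arg_min (bt_cond_cost d p) (\<lambda>S. S \<in> {S. bt_strategy d S}) S0"
    using ex_is_arg_min_if_finite by blast
  then have S0: "bt_strategy d S0" "\<And>S'. bt_strategy d S' \<Longrightarrow> bt_cond_cost d p S0 \<le> bt_cond_cost d p S'"
    by (auto simp: is_arg_min_linorder)
  obtain S where "bt_strategy d S" "bt_leaf_last d S" "bt_cond_cost d p S \<le> bt_cond_cost d p S0"
    using ex_leaf_last_cond_cost_le[OF d p S0(1)] by blast
  with S0(2) show ?thesis by (meson order_trans)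
qed

lemma optimal_leaf_last_q_Suc_le:
  assumes d: "d \<ge> 1" and p: "0 < p" "p < 1"
    and S: "bt_strategy d S" "bt_leaf_last d S"
    and opt: "\<forall>S'. bt_strategy d S' \<longrightarrow> bt_cond_cost d p S \<le> bt_cond_cost d p S'"
    and l: "1 \<le> l" "l < 2^d"
  shows "bt_q d p S (Suc l) \<le> bt_q d p S l"
proof -
  define Is where "Is = filter (\<lambda>e. e \<notin> bt_leaves d) S"
  define Ls where "Ls = leaf_order d S"
  define w where "w = bt_weight d p"
  define cost where "cost = (\<lambda>Ls. \<Sum>x\<in>bt_true_inputs d. w x * real (first_alive_pos d x Ls))"
  define mass where "mass = (\<lambda>j. \<Sum>x\<in>bt_true_inputs d. if first_alive_pos d x Ls = j then w x else 0)"
  have Ls: "set Ls = bt_leaves d" "distinct Ls" "length Ls = 2^d"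
    using leaf_order_strategy[OF d S(1)] by (simp_all add: Ls_def)
  have Is: "set Is = bt_edges d - bt_leaves d" "distinct Is"
    using S(1) by (auto simp: Is_def bt_strategy_def)
  obtain i where i: "l = Suc i" using l(1) by (cases l) auto
  have "Suc i < length Ls" using l Ls(3) i by simp
  then obtain xs a b ys where Ls_eq: "Ls = xs @ a # b # ys" and xs: "length xs = i"
    by (rule list_split_adjacent)
  define Ls' where "Ls' = xs @ b # a # ys"
  have "set Ls' = bt_leaves d" "distinct Ls'" using Ls(1,2) by (auto simp: Ls'_def Ls_eq)
  note S' = leaf_last_strategy_append[OF d Is this]
  have "bt_cond_cost d p S \<le> bt_cond_cost d p (Is @ Ls')" using opt S'(1) by blast
  then have "cost Ls \<le> cost Ls'"
    using bt_cond_cost_leaf_last[OF d p S] bt_cond_cost_leaf_last[OF d p S'(1,2)]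
      bt_true_mass_pos[OF d p] S'(3)
    by (simp add: divide_le_cancel cost_def w_def Ls_def)
  moreover have "cost Ls' + mass (Suc i) \<le> cost Ls + mass i"
    unfolding cost_def mass_def Ls'_def Ls_eq xs[symmetric]
    using bt_weight_nonneg[of p d] p by (intro first_alive_pos_swap_sum_le) (simp add: w_def)
  ultimately have "mass (Suc i) \<le> mass i" by linarith
  moreover have "bt_q d p S l = mass i / (\<Sum>x\<in>bt_true_inputs d. w x)"
    using bt_q_first_alive_pos[of l d S p] l Ls(3) unfolding mass_def w_def Ls_def i by simp
  moreover have "bt_q d p S (Suc l) = mass (Suc i) / (\<Sum>x\<in>bt_true_inputs d. w x)"
    using bt_q_first_alive_pos[of "Suc l" d S p] l Ls(3) unfolding mass_def w_def Ls_def i by simp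
  ultimately show ?thesis
    using bt_true_mass_pos[OF d p] by (simp add: w_def divide_right_mono)
qed

theorem lemma3:
  fixes \<epsilon> :: real and d :: nat
  assumes "0 < \<epsilon>" "\<epsilon> < 1" "d \<ge> 1"
  defines "p \<equiv> (1 + \<epsilon>) / 2"
  shows "(\<exists>S. bt_strategy d S \<and> bt_leaf_last d S \<and>
            (\<forall>S'. bt_strategy d S' \<longrightarrow> bt_cond_cost d p S \<le> bt_cond_cost d p S'))
       \<and> (\<forall>S. bt_strategy d S \<and> bt_leaf_last d S \<and>
            (\<forall>S'. bt_strategy d S' \<longrightarrow> bt_cond_cost d p S \<le> bt_cond_cost d p S')
            \<longrightarrow> (\<forall>l\<in>{1..<2^d}. bt_q d p S l \<ge> bt_q d p S (l + 1)))"
proof -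
  have p: "0 < p" "p < 1" using assms(1,2) by (simp_all add: p_def)
  show ?thesis
    using ex_optimal_leaf_last_strategy[OF assms(3)] optimal_leaf_last_q_Suc_le[OF assms(3) p] p
    by auto
qed

end
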